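(* The set of properties consisting of $EV$ (the even permutations) and $EL$ (the permutations of even length) is query-complete.
   Context: For $\sigma\in S_m$ and nonempty permutations $\alpha_1,\dots,\alpha_m$, the inflation $\sigma[\alpha_1,\dots,\alpha_m]$ is the permutation obtained by replacing each entry $\sigma(i)$ by an interval (contiguous positions, consecutive values) order-isomorphic to $\alpha_i$. A property is any set of permutations. A set $\mathcal{P}$ of properties is query-complete if for every permutation $\sigma\in S_m$ and every $P\in\mathcal{P}$, whether $\sigma[\alpha_1,\dots,\alpha_m]\in P$ is determined by $\sigma$ together with the knowledge, for each $i\in[m]$ and each $Q\in\mathcal{P}$, of whether $\alpha_i\in Q$. *)

theory Defs
  imports "HOL-Combinatorics.Permutations"
begin

definition is_perm :: "nat list \<Rightarrow> bool" where
  "is_perm p \<longleftrightarrow> distinct p \<and> set p = {0..<length p}"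

definition perm_fun :: "nat list \<Rightarrow> nat \<Rightarrow> nat" where
  "perm_fun p i = (if i < length p then p ! i else i)"

text \<open>Inflation sigma[alpha_1,...,alpha_m]: block i holds alpha_i shifted by the total
length of the blocks alpha_j with sigma(j) < sigma(i).\<close>
definition inflate :: "nat list \<Rightarrow> nat list list \<Rightarrow> nat list" where
  "inflate \<sigma> \<alpha>s = concat (map (\<lambda>i. map (\<lambda>x. x +
      sum_list (map (\<lambda>j. length (\<alpha>s ! j)) (filter (\<lambda>j. \<sigma> ! j < \<sigma> ! i) [0..<length \<sigma>])))
      (\<alpha>s ! i)) [0..<length \<sigma>])"

definition EV :: "nat list set" where
  "EV = {p. is_perm p \<and> evenperm (perm_fun p)}"

definition EL :: "nat list set" where
  "EL = {p. is_perm p \<and> even (length p)}"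

definition query_complete :: "nat list set set \<Rightarrow> bool" where
  "query_complete \<P> \<longleftrightarrow>
    (\<forall>\<sigma> \<alpha>s \<beta>s. is_perm \<sigma> \<and> length \<alpha>s = length \<sigma> \<and> length \<beta>s = length \<sigma>
      \<and> (\<forall>i<length \<sigma>. is_perm (\<alpha>s ! i) \<and> \<alpha>s ! i \<noteq> [] \<and> is_perm (\<beta>s ! i) \<and> \<beta>s ! i \<noteq> [])
      \<and> (\<forall>i<length \<sigma>. \<forall>Q\<in>\<P>. (\<alpha>s ! i \<in> Q \<longleftrightarrow> \<beta>s ! i \<in> Q))
      \<longrightarrow> (\<forall>P\<in>\<P>. (inflate \<sigma> \<alpha>s \<in> P \<longleftrightarrow> inflate \<sigma> \<beta>s \<in> P)))"

end

theory Submission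
  imports Defs
begin

text \<open>The sign of a permutation is the parity of its number of inversions. An inversion of
  \<open>\<sigma>[\<alpha>\<^sub>1,\<dots>,\<alpha>\<^sub>m]\<close> either lies inside a single block, where it is an inversion of \<open>\<alpha>\<^sub>i\<close>,
  or joins two blocks \<open>i < j\<close> with \<open>\<sigma>(i) > \<sigma>(j)\<close>, and then all \<open>|\<alpha>\<^sub>i| |\<alpha>\<^sub>j|\<close> such pairs are
  inversions. So the parity of the inversion number of the inflation, like the parity of its
  length \<open>\<Sum> |\<alpha>\<^sub>i|\<close>, depends only on \<open>\<sigma>\<close> and on the parities of \<open>|\<alpha>\<^sub>i|\<close> and of the inversion
  numbers of the \<open>\<alpha>\<^sub>i\<close>, that is, on the membership of the \<open>\<alpha>\<^sub>i\<close> in \<open>EL\<close> and \<open>EV\<close>.\<close>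

fun inversions :: "'a::linorder list \<Rightarrow> nat" where
  "inversions [] = 0"
| "inversions (x # xs) = length (filter (\<lambda>y. y < x) xs) + inversions xs"

definition cross_inversions :: "'a::linorder list \<Rightarrow> 'a list \<Rightarrow> nat" where
  "cross_inversions xs ys = (\<Sum>x\<leftarrow>xs. length (filter (\<lambda>y. y < x) ys))"

lemma cross_inversions_Nil [simp]: "cross_inversions [] ys = 0"
  by (simp add: cross_inversions_def)

lemma cross_inversions_Cons [simp]:
  "cross_inversions (x # xs) ys = length (filter (\<lambda>y. y < x) ys) + cross_inversions xs ys"
  by (simp add: cross_inversions_def)

lemma cross_inversions_append_left:
  "cross_inversions (xs @ ys) zs = cross_inversions xs zs + cross_inversions ys zs"
  by (simp add: cross_inversions_def)

lemma cross_inversions_eq_0: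
  "\<forall>x\<in>set xs. \<forall>y\<in>set ys. x \<le> y \<Longrightarrow> cross_inversions xs ys = 0"
  by (induction xs) (auto simp: filter_empty_conv not_less)

lemma cross_inversions_eq_length_mult:
  "\<forall>x\<in>set xs. \<forall>y\<in>set ys. y < x \<Longrightarrow> cross_inversions xs ys = length xs * length ys"
  by (induction xs) auto

lemma inversions_append:
  "inversions (xs @ ys) = inversions xs + inversions ys + cross_inversions xs ys"
  by (induction xs) auto

lemma inversions_swap_adjacent:
  assumes "b < a"
  shows "inversions (xs @ a # b # ys) = Suc (inversions (xs @ b # a # ys))"
proof -
  have "cross_inversions xs (a # b # ys) = cross_inversions xs (b # a # ys)"
    by (induction xs) auto
  with assms show ?thesis
    by (simp add: inversions_append)
qed

lemma inversions_sorted: "sorted xs \<Longrightarrow> inversions xs = 0"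
  by (induction xs) (auto simp: filter_empty_conv not_less)

lemma inversions_map_strict_mono:
  "strict_mono f \<Longrightarrow> inversions (map f xs) = inversions xs"
  by (induction xs) (auto simp: filter_map o_def strict_mono_less)

lemma inversions_concat:
  "inversions (concat ls) = (\<Sum>k<length ls. inversions (ls ! k))
     + (\<Sum>l<length ls. \<Sum>k<l. cross_inversions (ls ! k) (ls ! l))"
proof (induction ls rule: rev_induct)
  case (snoc xs ls)
  have "cross_inversions (concat ls) xs = (\<Sum>k<length ls. cross_inversions (ls ! k) xs)"
    by (induction ls rule: rev_induct) (simp_all add: cross_inversions_append_left nth_append)
  then show ?case
    using snoc by (simp add: inversions_append nth_append)
qed simp

lemma perm_fun_swap_adjacent:
  "perm_fun (xs @ b # a # ys)
     = perm_fun (xs @ a # b # ys) \<circ> transpose (length xs) (Suc (length xs))"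
  (is "?f = ?g")
proof
  fix k
  consider "k < length xs" | "k = length xs" | "k = Suc (length xs)"
    | j where "k = Suc (Suc (length xs)) + j"
    by (metis add_Suc_shift add_Suc less_imp_Suc_add linorder_neqE_nat not_less_eq)
  then show "?f k = ?g k"
    by cases (auto simp: perm_fun_def nth_append transpose_def)
qed

lemma permutes_perm_fun: "is_perm p \<Longrightarrow> perm_fun p permutes {..<length p}"
proof (rule bij_imp_permutes)
  assume "is_perm p"
  then have "bij_betw ((!) p) {..<length p} {..<length p}"
    by (intro bij_betw_nth) (auto simp: is_perm_def atLeast0LessThan)
  then show "bij_betw (perm_fun p) {..<length p} {..<length p}"
    by (rule bij_betw_cong[THEN iffD1, rotated]) (simp add: perm_fun_def)
qed (simp add: perm_fun_def)

lemma evenperm_perm_fun_iff: "is_perm p \<Longrightarrow> evenperm (perm_fun p) \<longleftrightarrow> even (inversions p)"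
proof (induction "inversions p" arbitrary: p rule: less_induct)
  case less
  show ?case
  proof (cases "\<exists>i. Suc i < length p \<and> p ! Suc i < p ! i")
    case True
    then obtain i where i: "Suc i < length p" "p ! Suc i < p ! i" by blast
    define xs ys a b where "xs = take i p" and "ys = drop (Suc (Suc i)) p"
      and "a = p ! i" and "b = p ! Suc i"
    have p: "p = xs @ a # b # ys" and "length xs = i" and "b < a"
      using i by (simp_all add: xs_def ys_def a_def b_def Cons_nth_drop_Suc)
    define q where "q = xs @ b # a # ys"
    have "is_perm q"
      using \<open>is_perm p\<close> unfolding p q_def is_perm_def by auto
    moreover have inv_p: "inversions p = Suc (inversions q)"
      unfolding p q_def using \<open>b < a\<close> by (rule inversions_swap_adjacent)
    ultimately have "evenperm (perm_fun q) \<longleftrightarrow> even (inversions q)"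
      using less.hyps by simp
    moreover have "perm_fun q = perm_fun p \<circ> transpose i (Suc i)"
      using perm_fun_swap_adjacent p \<open>length xs = i\<close> q_def by metis
    moreover have "permutation (perm_fun p)"
      using permutes_perm_fun[OF \<open>is_perm p\<close>] by (rule permutes_imp_permutation[rotated]) simp
    ultimately show ?thesis
      using inv_p by (auto simp: evenperm_comp permutation_swap_id evenperm_swap)
  next
    case False
    then have "sorted p"
      unfolding sorted_iff_nth_Suc by (meson not_less)
    with \<open>is_perm p\<close> have "p = [0..<length p]"
      by (intro sorted_distinct_set_unique) (auto simp: is_perm_def)
    then have "perm_fun p = id"
      by (metis perm_fun_def add_0 nth_upt eq_id_iff)
    with \<open>sorted p\<close> show ?thesis
      by (simp add: inversions_sorted)
  qed
qed

lemma is_perm_iff_distinct_less_length: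
  "is_perm p \<longleftrightarrow> distinct p \<and> (\<forall>x\<in>set p. x < length p)"
proof
  assume "distinct p \<and> (\<forall>x\<in>set p. x < length p)"
  moreover from this have "set p = {0..<length p}"
    by (intro card_subset_eq) (auto simp: distinct_card)
  ultimately show "is_perm p"
    by (simp add: is_perm_def)
qed (simp add: is_perm_def)

lemma distinct_concat_map:
  assumes "distinct xs" and "\<And>i. i \<in> set xs \<Longrightarrow> distinct (f i)"
    and "\<And>i j. i \<in> set xs \<Longrightarrow> j \<in> set xs \<Longrightarrow> i \<noteq> j \<Longrightarrow> set (f i) \<inter> set (f j) = {}"
  shows "distinct (concat (map f xs))"
  using assms
proof (induction xs)
  case (Cons a xs)
  then have "set (f a) \<inter> set (f i) = {}" if "i \<in> set xs" for i
    using that by (metis list.set_intros distinct.simps(2))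
  with Cons show ?case
    by auto
qed simp

definition inflation_offset :: "nat list \<Rightarrow> nat list list \<Rightarrow> nat \<Rightarrow> nat" where
  "inflation_offset \<sigma> \<alpha>s i = (\<Sum>j | j < length \<sigma> \<and> \<sigma> ! j < \<sigma> ! i. length (\<alpha>s ! j))"

definition inflation_block :: "nat list \<Rightarrow> nat list list \<Rightarrow> nat \<Rightarrow> nat list" where
  "inflation_block \<sigma> \<alpha>s i = map (\<lambda>x. x + inflation_offset \<sigma> \<alpha>s i) (\<alpha>s ! i)"

lemma inflate_eq_concat_blocks:
  "inflate \<sigma> \<alpha>s = concat (map (inflation_block \<sigma> \<alpha>s) [0..<length \<sigma>])"
proof -
  have "sum_list (map (\<lambda>j. length (\<alpha>s ! j)) (filter (\<lambda>j. \<sigma> ! j < \<sigma> ! i) [0..<length \<sigma>]))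
      = inflation_offset \<sigma> \<alpha>s i" for i
    unfolding inflation_offset_def
    by (subst sum_list_distinct_conv_sum_set) (auto intro: sum.cong)
  then show ?thesis
    by (simp add: inflate_def inflation_block_def[abs_def])
qed

lemma length_inflate: "length (inflate \<sigma> \<alpha>s) = (\<Sum>i<length \<sigma>. length (\<alpha>s ! i))"
  by (simp add: inflate_eq_concat_blocks length_concat inflation_block_def o_def
      interv_sum_list_conv_sum_set_nat atLeast0LessThan)

lemma inflation_offset_add_length_le:
  assumes "j < length \<sigma>" and "\<sigma> ! j < \<sigma> ! i"
  shows "inflation_offset \<sigma> \<alpha>s j + length (\<alpha>s ! j) \<le> inflation_offset \<sigma> \<alpha>s i"
proof -
  have "inflation_offset \<sigma> \<alpha>s j + length (\<alpha>s ! j)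
      = (\<Sum>k\<in>insert j {k. k < length \<sigma> \<and> \<sigma> ! k < \<sigma> ! j}. length (\<alpha>s ! k))"
    by (simp add: inflation_offset_def)
  also have "\<dots> \<le> inflation_offset \<sigma> \<alpha>s i"
    unfolding inflation_offset_def using assms by (intro sum_mono2) auto
  finally show ?thesis .
qed

lemma inflation_offset_add_length_le_length_inflate:
  assumes "i < length \<sigma>"
  shows "inflation_offset \<sigma> \<alpha>s i + length (\<alpha>s ! i) \<le> length (inflate \<sigma> \<alpha>s)"
proof -
  have "inflation_offset \<sigma> \<alpha>s i + length (\<alpha>s ! i)
      = (\<Sum>k\<in>insert i {k. k < length \<sigma> \<and> \<sigma> ! k < \<sigma> ! i}. length (\<alpha>s ! k))"
    by (simp add: inflation_offset_def)
  also have "\<dots> \<le> length (inflate \<sigma> \<alpha>s)"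
    unfolding length_inflate using assms by (intro sum_mono2) auto
  finally show ?thesis .
qed

lemma set_inflation_block:
  "is_perm (\<alpha>s ! i) \<Longrightarrow> set (inflation_block \<sigma> \<alpha>s i)
     = {inflation_offset \<sigma> \<alpha>s i..<inflation_offset \<sigma> \<alpha>s i + length (\<alpha>s ! i)}"
  by (auto simp: inflation_block_def is_perm_def image_iff intro: bexI[where x="x - y" for x y])

lemma inflation_block_less:
  assumes "j < length \<sigma>" and "\<sigma> ! j < \<sigma> ! i" and "is_perm (\<alpha>s ! i)" and "is_perm (\<alpha>s ! j)"
    and "x \<in> set (inflation_block \<sigma> \<alpha>s j)" and "y \<in> set (inflation_block \<sigma> \<alpha>s i)"
  shows "x < y"
  using inflation_offset_add_length_le[OF assms(1,2), of \<alpha>s] assms(3-6)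
  by (simp add: set_inflation_block)

lemma cross_inversions_inflation_block:
  assumes "distinct \<sigma>" and "i < length \<sigma>" and "j < length \<sigma>" and "i \<noteq> j"
    and "is_perm (\<alpha>s ! i)" and "is_perm (\<alpha>s ! j)"
  shows "cross_inversions (inflation_block \<sigma> \<alpha>s i) (inflation_block \<sigma> \<alpha>s j)
    = (if \<sigma> ! j < \<sigma> ! i then length (\<alpha>s ! i) * length (\<alpha>s ! j) else 0)"
proof (cases "\<sigma> ! j < \<sigma> ! i")
  case True
  then show ?thesis
    using inflation_block_less[OF assms(3) True assms(5,6)]
    by (simp add: cross_inversions_eq_length_mult inflation_block_def)
next
  case False
  with assms(1-4) have "\<sigma> ! i < \<sigma> ! j"
    by (metis linorder_neqE_nat nth_eq_iff_index_eq)
  then show ?thesis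
    using inflation_block_less[OF assms(2) _ assms(6,5)] False
    by (simp add: cross_inversions_eq_0 less_imp_le)
qed

lemma inversions_inflate:
  assumes "distinct \<sigma>" and "\<forall>i<length \<sigma>. is_perm (\<alpha>s ! i)"
  shows "inversions (inflate \<sigma> \<alpha>s) = (\<Sum>i<length \<sigma>. inversions (\<alpha>s ! i))
    + (\<Sum>j<length \<sigma>. \<Sum>i<j. if \<sigma> ! j < \<sigma> ! i then length (\<alpha>s ! i) * length (\<alpha>s ! j) else 0)"
proof -
  let ?block = "inflation_block \<sigma> \<alpha>s"
  have "inversions (?block i) = inversions (\<alpha>s ! i)" for i
    by (simp add: inflation_block_def inversions_map_strict_mono strict_mono_add)
  moreover have "cross_inversions (?block i) (?block j)
      = (if \<sigma> ! j < \<sigma> ! i then length (\<alpha>s ! i) * length (\<alpha>s ! j) else 0)"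
    if "i < j" and "j < length \<sigma>" for i j
    using that assms by (intro cross_inversions_inflation_block) auto
  ultimately show ?thesis
    by (simp add: inflate_eq_concat_blocks inversions_concat)
qed

lemma is_perm_inflate:
  assumes "distinct \<sigma>" and "\<forall>i<length \<sigma>. is_perm (\<alpha>s ! i)"
  shows "is_perm (inflate \<sigma> \<alpha>s)"
  unfolding is_perm_iff_distinct_less_length
proof
  have "set (inflation_block \<sigma> \<alpha>s i) \<inter> set (inflation_block \<sigma> \<alpha>s j) = {}"
    if "i < length \<sigma>" and "j < length \<sigma>" and "\<sigma> ! j < \<sigma> ! i" for i j
    using inflation_block_less[OF that(2,3)] assms(2) that(1,2) by fastforce
  moreover have "\<sigma> ! j < \<sigma> ! i \<or> \<sigma> ! i < \<sigma> ! j"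
    if "i < length \<sigma>" and "j < length \<sigma>" and "i \<noteq> j" for i j
    using that assms(1) by (metis linorder_neqE_nat nth_eq_iff_index_eq)
  ultimately show "distinct (inflate \<sigma> \<alpha>s)"
    unfolding inflate_eq_concat_blocks using assms(2)
    by (intro distinct_concat_map)
      (auto simp: inflation_block_def is_perm_def distinct_map, metis Int_commute)
  show "\<forall>x\<in>set (inflate \<sigma> \<alpha>s). x < length (inflate \<sigma> \<alpha>s)"
  proof
    fix x assume "x \<in> set (inflate \<sigma> \<alpha>s)"
    then obtain i where "i < length \<sigma>" and "x \<in> set (inflation_block \<sigma> \<alpha>s i)"
      by (auto simp: inflate_eq_concat_blocks)
    then show "x < length (inflate \<sigma> \<alpha>s)"
      using assms(2) inflation_offset_add_length_le_length_inflate[of i \<sigma> \<alpha>s]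
      by (simp add: set_inflation_block)
  qed
qed

lemma even_sum_cong:
  fixes f g :: "'a \<Rightarrow> nat"
  assumes "\<And>x. x \<in> A \<Longrightarrow> even (f x) \<longleftrightarrow> even (g x)"
  shows "even (sum f A) \<longleftrightarrow> even (sum g A)"
proof (cases "finite A")
  case True
  moreover have "{x \<in> A. odd (f x)} = {x \<in> A. odd (g x)}"
    using assms by blast
  ultimately show ?thesis
    by (simp add: even_sum_iff)
qed simp

lemma even_inversions_inflate_cong:
  assumes "distinct \<sigma>" and "\<forall>i<length \<sigma>. is_perm (\<alpha>s ! i) \<and> is_perm (\<beta>s ! i)"
    and "\<And>i. i < length \<sigma> \<Longrightarrow> even (length (\<alpha>s ! i)) \<longleftrightarrow> even (length (\<beta>s ! i))"
    and "\<And>i. i < length \<sigma> \<Longrightarrow> even (inversions (\<alpha>s ! i)) \<longleftrightarrow> even (inversions (\<beta>s ! i))"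
  shows "even (inversions (inflate \<sigma> \<alpha>s)) \<longleftrightarrow> even (inversions (inflate \<sigma> \<beta>s))"
proof -
  have "even (\<Sum>i<length \<sigma>. inversions (\<alpha>s ! i)) \<longleftrightarrow> even (\<Sum>i<length \<sigma>. inversions (\<beta>s ! i))"
    using assms(4) by (intro even_sum_cong) simp
  moreover have
    "even (\<Sum>j<length \<sigma>. \<Sum>i<j. if \<sigma> ! j < \<sigma> ! i then length (\<alpha>s ! i) * length (\<alpha>s ! j) else 0)
       \<longleftrightarrow> even (\<Sum>j<length \<sigma>. \<Sum>i<j. if \<sigma> ! j < \<sigma> ! i then length (\<beta>s ! i) * length (\<beta>s ! j) else 0)"
    using assms(3) by (intro even_sum_cong) auto
  ultimately show ?thesis
    using assms(1,2) by (simp add: inversions_inflate)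
qed

theorem lemma4p3:
  shows "query_complete {EV, EL}"
  unfolding query_complete_def
proof (intro allI impI)
  fix \<sigma> :: "nat list" and \<alpha>s \<beta>s :: "nat list list"
  assume "is_perm \<sigma> \<and> length \<alpha>s = length \<sigma> \<and> length \<beta>s = length \<sigma>
      \<and> (\<forall>i<length \<sigma>. is_perm (\<alpha>s ! i) \<and> \<alpha>s ! i \<noteq> [] \<and> is_perm (\<beta>s ! i) \<and> \<beta>s ! i \<noteq> [])
      \<and> (\<forall>i<length \<sigma>. \<forall>Q\<in>{EV, EL}. (\<alpha>s ! i \<in> Q \<longleftrightarrow> \<beta>s ! i \<in> Q))"
  \<comment> \<open>the blocks need not be nonempty for the argument\<close>
  then have \<sigma>: "distinct \<sigma>" and perms: "\<forall>i<length \<sigma>. is_perm (\<alpha>s ! i) \<and> is_perm (\<beta>s ! i)"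
    and EL_iff: "\<And>i. i < length \<sigma> \<Longrightarrow> even (length (\<alpha>s ! i)) \<longleftrightarrow> even (length (\<beta>s ! i))"
    and EV_iff: "\<And>i. i < length \<sigma> \<Longrightarrow> even (inversions (\<alpha>s ! i)) \<longleftrightarrow> even (inversions (\<beta>s ! i))"
    by (auto simp: is_perm_def EL_def EV_def evenperm_perm_fun_iff)
  have "even (length (inflate \<sigma> \<alpha>s)) \<longleftrightarrow> even (length (inflate \<sigma> \<beta>s))"
    unfolding length_inflate using EL_iff by (intro even_sum_cong) simp
  moreover have "even (inversions (inflate \<sigma> \<alpha>s)) \<longleftrightarrow> even (inversions (inflate \<sigma> \<beta>s))"
    using \<sigma> perms EL_iff EV_iff by (rule even_inversions_inflate_cong)
  moreover have "is_perm (inflate \<sigma> \<alpha>s)" and "is_perm (inflate \<sigma> \<beta>s)"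
    using \<sigma> perms by (auto intro: is_perm_inflate)
  ultimately show "\<forall>P\<in>{EV, EL}. inflate \<sigma> \<alpha>s \<in> P \<longleftrightarrow> inflate \<sigma> \<beta>s \<in> P"
    by (simp add: EV_def EL_def evenperm_perm_fun_iff)
qed

end
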